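(* Let $G$ be a layered graph over $\Sigma_{in}$ of depth $n$ and $\mathsf{C}$ a $(G,\Sigma_{out})$-code. Fix $w\in\Sigma_{out}^n$ and $\epsilon>0$. For any subset $S\subseteq L(\mathsf{C},w,\epsilon)$, there is a prefix tree of $S$.
   Context: A layered graph over alphabet $\Sigma$ of depth $n$ is a directed graph whose vertices are partitioned into layers $0,1,\dots,n$, with exactly one vertex (the root) in layer $0$, and where each vertex in layer $i<n$ has exactly $|\Sigma|$ out-edges to vertices in layer $i+1$, the out-edges being labeled by the distinct elements of $\Sigma$ (the endpoints need not be distinct). A string $p\in\Sigma_{in}^i$ determines a unique path from the root to layer $i$; $v(p)$ is its endpoint. A $(G,\Sigma_{out})$-code $\mathsf{C}$ is an assignment of an element of $\Sigma_{out}$ to each edge of $G$; $\mathsf{C}(p)\in\Sigma_{out}^i$ is the string of labels along the path $p$. For $x,y\in\Sigma^m$, $\Delta$ is Hamming distance and the suffix distance is $\Delta_{sfx}(x,y)=\max_{0\le i\le m-1}\frac{\Delta(x[i+1:m],y[i+1:m])}{m-i}$. Define $L_i(\mathsf{C},w,\epsilon)=\{v(p): p\in\Sigma_{in}^i,\ \Delta_{sfx}(\mathsf{C}(p),w[1:i])<1-\epsilon\}$ and $L(\mathsf{C},w,\epsilon)=\bigcup_{i=1}^n L_i(\mathsf{C},w,\epsilon)$. For $S\subseteq L(\mathsf{C},w,\epsilon)$, a prefix tree of $S$ is a union of paths $p(v)$, one for each $v\in S$, where $p(v)$ goes from the root to $v$ and satisfies $\Delta_{sfx}(\mathsf{C}(p(v)),w[1:|p(v)|])<1-\epsilon$,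 such that this union forms a rooted tree. *)

theory Defs
  imports Complex_Main
begin

text \<open>Edges are identified with pairs (v, a),
  so parallel edges (distinct labels, same endpoints) are allowed.\<close>

definition layered_graph ::
  "'a set \<Rightarrow> nat \<Rightarrow> 'v set \<Rightarrow> ('v \<Rightarrow> nat) \<Rightarrow> 'v \<Rightarrow> ('v \<Rightarrow> 'a \<Rightarrow> 'v) \<Rightarrow> bool" where
  "layered_graph Sig n V lay r0 delta \<longleftrightarrow>
     finite V \<and> finite Sig \<and> Sig \<noteq> {} \<and>
     r0 \<in> V \<and> lay r0 = 0 \<and>
     (\<forall>v\<in>V. lay v \<le> n) \<and>
     (\<forall>v\<in>V. lay v = 0 \<longrightarrow> v = r0) \<and>
     (\<forall>v\<in>V. lay v < n \<longrightarrow> (\<forall>a\<in>Sig. delta v a \<in> V \<and> lay (delta v a) = Suc (lay v)))"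

definition vtx :: "'v \<Rightarrow> ('v \<Rightarrow> 'a \<Rightarrow> 'v) \<Rightarrow> 'a list \<Rightarrow> 'v" where
  "vtx r0 delta p = foldl delta r0 p"

definition path_edges :: "'v \<Rightarrow> ('v \<Rightarrow> 'a \<Rightarrow> 'v) \<Rightarrow> 'a list \<Rightarrow> ('v \<times> 'a) set" where
  "path_edges r0 delta p = {(vtx r0 delta (take i p), p ! i) | i. i < length p}"

definition is_code ::
  "'a set \<Rightarrow> nat \<Rightarrow> 'v set \<Rightarrow> ('v \<Rightarrow> nat) \<Rightarrow> 'b set \<Rightarrow> ('v \<Rightarrow> 'a \<Rightarrow> 'b) \<Rightarrow> bool" where
  "is_code Sig n V lay SigOut C \<longleftrightarrow>
     (\<forall>v\<in>V. lay v < n \<longrightarrow> (\<forall>a\<in>Sig. C v a \<in> SigOut))"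

definition encode :: "'v \<Rightarrow> ('v \<Rightarrow> 'a \<Rightarrow> 'v) \<Rightarrow> ('v \<Rightarrow> 'a \<Rightarrow> 'b) \<Rightarrow> 'a list \<Rightarrow> 'b list" where
  "encode r0 delta C p = map (\<lambda>i. C (vtx r0 delta (take i p)) (p ! i)) [0..<length p]"

definition hamming :: "'b list \<Rightarrow> 'b list \<Rightarrow> nat" where
  "hamming x y = card {i. i < length x \<and> x ! i \<noteq> y ! i}"

text \<open>Suffix distance for strings of equal length m (0 for m = 0, the max over an empty range).\<close>
definition sfx_dist :: "'b list \<Rightarrow> 'b list \<Rightarrow> real" where
  "sfx_dist x y = (let m = length x in
     if m = 0 then 0
     else Max ((\<lambda>i. real (hamming (drop i x) (drop i y)) / real (m - i)) ` {0..<m}))"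

definition Li :: "'a set \<Rightarrow> 'v \<Rightarrow> ('v \<Rightarrow> 'a \<Rightarrow> 'v) \<Rightarrow> ('v \<Rightarrow> 'a \<Rightarrow> 'b) \<Rightarrow> 'b list \<Rightarrow> real \<Rightarrow> nat \<Rightarrow> 'v set" where
  "Li Sig r0 delta C w eps i =
     {vtx r0 delta p | p. set p \<subseteq> Sig \<and> length p = i \<and>
        sfx_dist (encode r0 delta C p) (take i w) < 1 - eps}"

definition Lset :: "'a set \<Rightarrow> nat \<Rightarrow> 'v \<Rightarrow> ('v \<Rightarrow> 'a \<Rightarrow> 'v) \<Rightarrow> ('v \<Rightarrow> 'a \<Rightarrow> 'b) \<Rightarrow> 'b list \<Rightarrow> real \<Rightarrow> 'v set" where
  "Lset Sig n r0 delta C w eps = (\<Union>i\<in>{1..n}. Li Sig r0 delta C w eps i)"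

definition rooted_tree :: "'v \<Rightarrow> ('v \<Rightarrow> 'a \<Rightarrow> 'v) \<Rightarrow> ('v \<times> 'a) set \<Rightarrow> bool" where
  "rooted_tree r0 delta E \<longleftrightarrow>
     (\<forall>x \<in> insert r0 ((\<lambda>(u, a). delta u a) ` E).
        \<exists>!q. path_edges r0 delta q \<subseteq> E \<and> vtx r0 delta q = x)"

definition is_prefix_tree ::
  "'a set \<Rightarrow> nat \<Rightarrow> 'v \<Rightarrow> ('v \<Rightarrow> 'a \<Rightarrow> 'v) \<Rightarrow> ('v \<Rightarrow> 'a \<Rightarrow> 'b) \<Rightarrow> 'b list \<Rightarrow> real
     \<Rightarrow> 'v set \<Rightarrow> ('v \<Rightarrow> 'a list) \<Rightarrow> bool" where
  "is_prefix_tree Sig n r0 delta C w eps S pt \<longleftrightarrow>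
     (\<forall>v\<in>S. set (pt v) \<subseteq> Sig \<and> length (pt v) \<le> n \<and> vtx r0 delta (pt v) = v \<and>
        sfx_dist (encode r0 delta C (pt v)) (take (length (pt v)) w) < 1 - eps) \<and>
     rooted_tree r0 delta (\<Union>v\<in>S. path_edges r0 delta (pt v))"

end

theory Submission
  imports Defs "HOL-Library.List_Lexorder" "HOL-Library.Product_Lexorder"
begin

text \<open>For strings x, y of length m, sfx_dist x y < c holds iff the suffix excess
  max_j (hamming (drop j x) (drop j y) - c (m - j)) is negative. Appending one symbol to
  both strings maps an excess e to max e 0 + [s \<noteq> t] - c, which is monotone in e. Hence,
  among input paths ending in the same vertex, one of smaller excess stays at least as good
  under any common extension. Choosing for every vertex a path that minimises the excess,
  with ties broken by comparing the prefixes from the end backwards, makes the choice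
  compatible with extensions: every prefix of a chosen path is the path chosen for its own
  endpoint. The chosen paths therefore form a tree, and each of them has no larger excess
  than any witness of membership in L.\<close>

lemma hamming_conv_filter_zip:
  "length x = length y \<Longrightarrow> hamming x y = length (filter (\<lambda>(a, b). a \<noteq> b) (zip x y))"
  unfolding hamming_def length_filter_conv_card by (auto intro!: arg_cong[where f = card])

lemma hamming_append:
  "length a = length b \<Longrightarrow> length c = length d \<Longrightarrow> hamming (a @ c) (b @ d) = hamming a b + hamming c d"
  by (simp add: hamming_conv_filter_zip)

definition suffix_excess :: "real \<Rightarrow> 'b list \<Rightarrow> 'b list \<Rightarrow> real" where
  "suffix_excess c x y =
     Max ((\<lambda>j. real (hamming (drop j x) (drop j y)) - c * real (length x - j)) ` {0..<length x})"

lemma sfx_dist_less_iff_suffix_excess: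
  fixes c :: real
  assumes "length x = length y" "x \<noteq> []"
  shows "sfx_dist x y < c \<longleftrightarrow> suffix_excess c x y < 0"
proof -
  have "sfx_dist x y < c \<longleftrightarrow>
      (\<forall>j<length x. real (hamming (drop j x) (drop j y)) / real (length x - j) < c)"
    unfolding sfx_dist_def Let_def using assms(2) by (auto simp: Max_less_iff)
  also have "\<dots> \<longleftrightarrow> (\<forall>j<length x. real (hamming (drop j x) (drop j y)) - c * real (length x - j) < 0)"
    by (intro all_cong) (simp add: pos_divide_less_eq algebra_simps)
  also have "\<dots> \<longleftrightarrow> suffix_excess c x y < 0"
    unfolding suffix_excess_def using assms(2) by (auto simp: Max_less_iff)
  finally show ?thesis .
qed

lemma suffix_excess_snoc:
  fixes c :: real
  assumes "length x = length y" "x \<noteq> []"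
  shows "suffix_excess c (x @ [s]) (y @ [t]) = max (suffix_excess c x y) 0 + (real (hamming [s] [t]) - c)"
proof -
  let ?d = "real (hamming [s] [t]) - c"
  let ?h = "\<lambda>j. real (hamming (drop j x) (drop j y)) - c * real (length x - j)"
  let ?g = "\<lambda>j. real (hamming (drop j (x @ [s])) (drop j (y @ [t]))) - c * real (Suc (length x) - j)"
  have ne: "{0..<length x} \<noteq> {}"
    using assms(2) by simp
  have "suffix_excess c (x @ [s]) (y @ [t]) = Max (?g ` insert (length x) {0..<length x})"
    unfolding suffix_excess_def by (simp add: atLeast0_lessThan_Suc)
  also have "\<dots> = Max (insert ?d ((\<lambda>j. ?h j + ?d) ` {0..<length x}))"
  proof -
    have "?g j = ?h j + ?d" if "j < length x" for j
      using assms(1) that by (simp add: hamming_append of_nat_diff algebra_simps)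
    then have "?g ` {0..<length x} = (\<lambda>j. ?h j + ?d) ` {0..<length x}"
      by (intro image_cong) simp_all
    moreover have "?g (length x) = ?d"
      using assms(1) by simp
    ultimately show ?thesis
      by simp
  qed
  also have "\<dots> = max ?d (Max (?h ` {0..<length x}) + ?d)"
    using ne by (simp add: Max_add_commute)
  also have "Max (?h ` {0..<length x}) = suffix_excess c x y"
    unfolding suffix_excess_def ..
  finally show ?thesis
    by (simp add: max_def)
qed

lemma suffix_excess_snoc_mono:
  fixes c :: real
  assumes "length x' = length y" "length x = length y"
    and "suffix_excess c x' y \<le> suffix_excess c x y"
  shows "suffix_excess c (x' @ [s]) (y @ [t]) \<le> suffix_excess c (x @ [s]) (y @ [t])"
proof (cases "y = []")
  case False
  with assms have "x' \<noteq> []" "x \<noteq> []"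
    by auto
  with assms show ?thesis
    by (simp add: suffix_excess_snoc max.mono)
qed (use assms in simp)

lemma vtx_Nil [simp]: "vtx r0 delta [] = r0"
  by (simp add: vtx_def)

lemma vtx_append: "vtx r0 delta (p @ q) = vtx (vtx r0 delta p) delta q"
  by (simp add: vtx_def)

lemma vtx_snoc [simp]: "vtx r0 delta (p @ [a]) = delta (vtx r0 delta p) a"
  by (simp add: vtx_def)

lemma length_encode [simp]: "length (encode r0 delta C p) = length p"
  by (simp add: encode_def)

lemma encode_snoc: "encode r0 delta C (p @ [a]) = encode r0 delta C p @ [C (vtx r0 delta p) a]"
  unfolding encode_def by (auto simp: nth_append)

lemma path_edges_take_subset: "path_edges r0 delta (take i p) \<subseteq> path_edges r0 delta p"
  unfolding path_edges_def by (auto simp: min_def)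

lemma layered_graph_lay_vtx:
  assumes "layered_graph Sig n V lay r0 delta" "set p \<subseteq> Sig" "length p \<le> n"
  shows "vtx r0 delta p \<in> V \<and> lay (vtx r0 delta p) = length p"
  using assms(2,3)
proof (induction p rule: rev_induct)
  case Nil
  then show ?case
    using assms(1) by (simp add: layered_graph_def)
next
  case (snoc a p)
  then show ?case
    using assms(1) by (simp add: layered_graph_def)
qed

lemma path_edges_conv_image:
  "path_edges r0 delta p = (\<lambda>i. (vtx r0 delta (take i p), p ! i)) ` {..<length p}"
  unfolding path_edges_def by blast

lemma path_edges_Nil [simp]: "path_edges r0 delta [] = {}"
  by (simp add: path_edges_def)

lemma path_edges_snoc [simp]:
  "path_edges r0 delta (q @ [a]) = insert (vtx r0 delta q, a) (path_edges r0 delta q)"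
proof -
  have "(\<lambda>i. (vtx r0 delta (take i (q @ [a])), (q @ [a]) ! i)) ` {..<length q} =
      (\<lambda>i. (vtx r0 delta (take i q), q ! i)) ` {..<length q}"
    by (intro image_cong) (auto simp: nth_append)
  then show ?thesis
    by (simp add: path_edges_conv_image lessThan_Suc)
qed

definition path_excess :: "real \<Rightarrow> 'v \<Rightarrow> ('v \<Rightarrow> 'a \<Rightarrow> 'v) \<Rightarrow> ('v \<Rightarrow> 'a \<Rightarrow> 'b) \<Rightarrow> 'b list \<Rightarrow> 'a list \<Rightarrow> real" where
  "path_excess c r0 delta C w p = suffix_excess c (encode r0 delta C p) (take (length p) w)"

lemma sfx_dist_encode_less_iff:
  assumes "p \<noteq> []" "length p \<le> length w"
  shows "sfx_dist (encode r0 delta C p) (take (length p) w) < c \<longleftrightarrow> path_excess c r0 delta C w p < 0"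
  unfolding path_excess_def using assms
  by (intro sfx_dist_less_iff_suffix_excess) (auto simp: min_def dest: arg_cong[where f = length])

lemma path_excess_snoc_mono:
  assumes "length p' = length p" "length p < length w" "vtx r0 delta p' = vtx r0 delta p"
    and "path_excess c r0 delta C w p' \<le> path_excess c r0 delta C w p"
  shows "path_excess c r0 delta C w (p' @ [a]) \<le> path_excess c r0 delta C w (p @ [a])"
proof -
  have "take (length (p @ [a])) w = take (length p) w @ [w ! length p]"
    using assms(2) by (simp add: take_Suc_conv_app_nth)
  then show ?thesis
    using assms unfolding path_excess_def by (simp add: encode_snoc suffix_excess_snoc_mono)
qed

lemma rooted_tree_UN_path_edges:
  assumes root: "T r0 = []"
    and prefix_closed: "\<And>v i. v \<in> S \<Longrightarrow> i \<le> length (T v) \<Longrightarrow>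
      T (vtx r0 delta (take i (T v))) = take i (T v)"
  shows "rooted_tree r0 delta (\<Union>v\<in>S. path_edges r0 delta (T v))"
proof -
  define E where "E = (\<Union>v\<in>S. path_edges r0 delta (T v))"
  have edge: "\<exists>v\<in>S. \<exists>i<length (T v). u = vtx r0 delta (take i (T v)) \<and> a = T v ! i"
    if "(u, a) \<in> E" for u a
    using that unfolding E_def path_edges_def by blast
  have canonical: "q = T (vtx r0 delta q)" if "path_edges r0 delta q \<subseteq> E" for q
    using that
  proof (induction q rule: rev_induct)
    case Nil
    then show ?case
      using root by simp
  next
    case (snoc a q)
    have last_edge: "(vtx r0 delta q, a) \<in> E" and "path_edges r0 delta q \<subseteq> E"
      using snoc.prems by simp_all
    then have IH: "q = T (vtx r0 delta q)"
      using snoc.IH by blast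
    from last_edge obtain v i where v: "v \<in> S" "i < length (T v)"
      and u: "vtx r0 delta q = vtx r0 delta (take i (T v))" and a: "a = T v ! i"
      using edge by blast
    have "q = take i (T v)"
      using IH u prefix_closed[OF v(1), of i] v(2) by (metis less_imp_le)
    then have "q @ [a] = take (Suc i) (T v)"
      using v(2) a by (simp add: take_Suc_conv_app_nth)
    then show ?case
      using prefix_closed[OF v(1), of "Suc i"] v(2) by simp
  qed
  have reachable: "\<exists>q. path_edges r0 delta q \<subseteq> E \<and> vtx r0 delta q = x"
    if x: "x \<in> insert r0 ((\<lambda>(u, a). delta u a) ` E)" for x
  proof (cases "x = r0")
    case True
    then show ?thesis
      by (intro exI[of _ "[]"]) simp
  next
    case False
    then obtain u a where "(u, a) \<in> E" "x = delta u a"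
      using x by auto
    then obtain v i where v: "v \<in> S" "i < length (T v)" "x = delta (vtx r0 delta (take i (T v))) (T v ! i)"
      using edge by blast
    then have "x = vtx r0 delta (take (Suc i) (T v))"
      by (simp add: take_Suc_conv_app_nth)
    have "path_edges r0 delta (take (Suc i) (T v)) \<subseteq> path_edges r0 delta (T v)"
      by (rule path_edges_take_subset)
    also have "\<dots> \<subseteq> E"
      using v(1) unfolding E_def by blast
    finally show ?thesis
      using \<open>x = vtx r0 delta (take (Suc i) (T v))\<close> by blast
  qed
  show ?thesis
    unfolding rooted_tree_def E_def[symmetric]
  proof
    fix x
    assume "x \<in> insert r0 ((\<lambda>(u, a). delta u a) ` E)"
    then obtain q where q: "path_edges r0 delta q \<subseteq> E" "vtx r0 delta q = x"
      using reachable by blast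
    show "\<exists>!q. path_edges r0 delta q \<subseteq> E \<and> vtx r0 delta q = x"
    proof (rule ex1I)
      show "path_edges r0 delta q \<subseteq> E \<and> vtx r0 delta q = x"
        using q by blast
      show "q' = q" if "path_edges r0 delta q' \<subseteq> E \<and> vtx r0 delta q' = x" for q'
        using that q canonical by metis
    qed
  qed
qed

definition prefix_key :: "('a list \<Rightarrow> real) \<Rightarrow> ('a \<Rightarrow> nat) \<Rightarrow> 'a list \<Rightarrow> (real \<times> nat) list" where
  "prefix_key P f p = rev (map (\<lambda>i. (P (take (Suc i) p), f (p ! i))) [0..<length p])"

lemma prefix_key_Nil [simp]: "prefix_key P f [] = []"
  by (simp add: prefix_key_def)

lemma prefix_key_snoc [simp]: "prefix_key P f (p @ [a]) = (P (p @ [a]), f a) # prefix_key P f p"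
  unfolding prefix_key_def by (auto simp: nth_append intro!: map_cong)

lemma map_snd_prefix_key: "map snd (prefix_key P f p) = rev (map f p)"
  by (induction p rule: rev_induct) simp_all

lemma prefix_key_inj:
  assumes "inj_on f A" "set p \<subseteq> A" "set q \<subseteq> A" "prefix_key P f p = prefix_key P f q"
  shows "p = q"
proof -
  have "map f p = map f q"
    using arg_cong[OF assms(4), of "\<lambda>k. rev (map snd k)"] by (simp add: map_snd_prefix_key)
  then show ?thesis
    using assms(1-3) inj_on_map_eq_map inj_on_subset by (metis le_sup_iff)
qed

lemma prefix_key_le_imp_le:
  assumes "p \<noteq> []" "q \<noteq> []" "prefix_key P f p \<le> prefix_key P f q"
  shows "P p \<le> P q"
proof -
  obtain p0 a q0 b where "p = p0 @ [a]" "q = q0 @ [b]"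
    using assms(1,2) by (metis rev_exhaust)
  then show ?thesis
    using assms(3) by auto
qed

locale layered_potential =
  fixes Sig :: "'a set" and n :: nat and V :: "'v set" and lay :: "'v \<Rightarrow> nat" and r0 :: 'v
    and delta :: "'v \<Rightarrow> 'a \<Rightarrow> 'v" and P :: "'a list \<Rightarrow> real"
  assumes layered: "layered_graph Sig n V lay r0 delta"
    and P_snoc_mono: "\<And>p p' a. set p \<subseteq> Sig \<Longrightarrow> set p' \<subseteq> Sig \<Longrightarrow> length p' = length p \<Longrightarrow>
      length p < n \<Longrightarrow> vtx r0 delta p' = vtx r0 delta p \<Longrightarrow> a \<in> Sig \<Longrightarrow>
      P p' \<le> P p \<Longrightarrow> P (p' @ [a]) \<le> P (p @ [a])"
begin

definition paths_to :: "'v \<Rightarrow> 'a list set" where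
  "paths_to x = {p. set p \<subseteq> Sig \<and> length p \<le> n \<and> vtx r0 delta p = x}"

lemma finite_paths_to: "finite (paths_to x)"
proof (rule finite_subset)
  show "paths_to x \<subseteq> {p. set p \<subseteq> Sig \<and> length p \<le> n}"
    unfolding paths_to_def by blast
  show "finite {p. set p \<subseteq> Sig \<and> length p \<le> n}"
    using layered by (simp add: layered_graph_def finite_lists_length_le)
qed

lemma length_paths_to: "p \<in> paths_to x \<Longrightarrow> length p = lay x"
  unfolding paths_to_def using layered_graph_lay_vtx[OF layered] by auto

text \<open>The rank of the labels only breaks ties, making keys injective on paths so that
  minimal paths are unique.\<close>

definition rank :: "'a \<Rightarrow> nat" where
  "rank = (SOME f. inj_on f Sig)"

lemma inj_on_rank: "inj_on rank Sig"
proof -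
  have "finite Sig"
    using layered by (simp add: layered_graph_def)
  then have "\<exists>f :: 'a \<Rightarrow> nat. inj_on f Sig"
    using finite_imp_inj_to_nat_seg by blast
  then show ?thesis
    unfolding rank_def by (rule someI_ex)
qed

abbreviation key :: "'a list \<Rightarrow> (real \<times> nat) list" where
  "key \<equiv> prefix_key P rank"

definition best_path :: "'v \<Rightarrow> 'a list" where
  "best_path x = arg_min_on key (paths_to x)"

lemma best_path_in_paths_to: "paths_to x \<noteq> {} \<Longrightarrow> best_path x \<in> paths_to x"
  unfolding best_path_def using finite_paths_to by (rule arg_min_if_finite(1))

lemma length_best_path:
  assumes "q \<in> paths_to x"
  shows "length (best_path x) = length q"
proof -
  have "best_path x \<in> paths_to x"
    using assms by (intro best_path_in_paths_to) auto
  then show ?thesis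
    using assms length_paths_to by simp
qed

lemma key_best_path_le: "q \<in> paths_to x \<Longrightarrow> key (best_path x) \<le> key q"
  unfolding best_path_def using finite_paths_to by (rule arg_min_least) auto

lemma key_best_path_less:
  assumes "q \<in> paths_to x" "q \<noteq> best_path x"
  shows "key (best_path x) < key q"
proof -
  have "best_path x \<in> paths_to x"
    using assms(1) by (intro best_path_in_paths_to) auto
  then have "key (best_path x) \<noteq> key q"
    using assms prefix_key_inj[OF inj_on_rank, of "best_path x" q] by (auto simp: paths_to_def)
  then show ?thesis
    using key_best_path_le[OF assms(1)] by simp
qed

lemma key_less_append:
  assumes "p \<in> paths_to u" "p' \<in> paths_to u" "key p' < key p"
    and "set r \<subseteq> Sig" "length (p @ r) \<le> n"
  shows "key (p' @ r) < key (p @ r)"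
  using assms(4,5)
proof (induction r rule: rev_induct)
  case Nil
  then show ?case
    using assms(3) by simp
next
  case (snoc a r)
  have IH: "key (p' @ r) < key (p @ r)"
    using snoc by simp
  have len: "length (p' @ r) = length (p @ r)"
    using assms(1,2) length_paths_to by simp
  then have "p @ r \<noteq> []" "p' @ r \<noteq> []"
    using IH by auto
  then have "P (p' @ r) \<le> P (p @ r)"
    using IH by (intro prefix_key_le_imp_le[where f = rank]) simp_all
  then have "P ((p' @ r) @ [a]) \<le> P ((p @ r) @ [a])"
    using assms(1,2) snoc.prems len
    by (intro P_snoc_mono) (auto simp: paths_to_def vtx_append)
  then have "key ((p' @ r) @ [a]) < key ((p @ r) @ [a])"
    using IH by (simp only: prefix_key_snoc) (auto simp: le_less)
  then show ?case
    by simp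
qed

lemma best_path_take:
  assumes "paths_to x \<noteq> {}" "i \<le> length (best_path x)"
  shows "best_path (vtx r0 delta (take i (best_path x))) = take i (best_path x)"
proof (rule ccontr)
  let ?b = "best_path x"
  let ?u = "vtx r0 delta (take i ?b)"
  have b: "?b \<in> paths_to x"
    using assms(1) by (rule best_path_in_paths_to)
  then have prefix: "take i ?b \<in> paths_to ?u"
    unfolding paths_to_def by (auto dest: in_set_takeD)
  then have best_u: "best_path ?u \<in> paths_to ?u"
    using best_path_in_paths_to by blast
  assume "best_path ?u \<noteq> take i ?b"
  then have "key (best_path ?u) < key (take i ?b)"
    using key_best_path_less[OF prefix] by simp
  then have "key (best_path ?u @ drop i ?b) < key ?b"
    using key_less_append[OF prefix best_u, of "drop i ?b"] b
    by (auto simp: paths_to_def dest: in_set_dropD)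
  moreover have "best_path ?u @ drop i ?b \<in> paths_to x"
  proof -
    have "vtx r0 delta (best_path ?u @ drop i ?b) = vtx ?u delta (drop i ?b)"
      using best_u by (simp add: vtx_append paths_to_def)
    also have "\<dots> = vtx r0 delta ?b"
      by (metis append_take_drop_id vtx_append)
    moreover have "length (best_path ?u) = length (take i ?b)"
      using length_paths_to[OF best_u] length_paths_to[OF prefix] by simp
    ultimately show ?thesis
      using b best_u by (auto simp: paths_to_def dest: in_set_dropD)
  qed
  ultimately show False
    using key_best_path_le by (meson not_le)
qed

lemma best_path_root: "best_path r0 = []"
proof -
  have "[] \<in> paths_to r0"
    by (simp add: paths_to_def)
  then show ?thesis
    using length_best_path by fastforce
qed

lemma best_path_minimal: "q \<in> paths_to x \<Longrightarrow> P (best_path x) \<le> P q"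
proof (cases "q = []")
  case True
  assume "q \<in> paths_to x"
  then show ?thesis
    using True length_best_path by fastforce
next
  case False
  assume q: "q \<in> paths_to x"
  then have "best_path x \<noteq> []"
    using False length_best_path by fastforce
  then show ?thesis
    using False key_best_path_le[OF q] by (rule prefix_key_le_imp_le)
qed

end

locale layered_code =
  fixes Sig :: "'a set" and n :: nat and V :: "'v set" and lay :: "'v \<Rightarrow> nat" and r0 :: 'v
    and delta :: "'v \<Rightarrow> 'a \<Rightarrow> 'v" and C :: "'v \<Rightarrow> 'a \<Rightarrow> 'b" and w :: "'b list" and c :: real
  assumes layered_graph: "layered_graph Sig n V lay r0 delta"
    and length_w: "length w = n"

sublocale layered_code \<subseteq> layered_potential Sig n V lay r0 delta "path_excess c r0 delta C w"
  using layered_graph length_w by unfold_locales (auto intro: path_excess_snoc_mono)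

lemma (in layered_code) sfx_dist_best_path_less:
  assumes p: "p \<in> paths_to x" "p \<noteq> []"
    and sfx: "sfx_dist (encode r0 delta C p) (take (length p) w) < c"
  shows "sfx_dist (encode r0 delta C (best_path x)) (take (length (best_path x)) w) < c"
proof -
  have "length p \<le> length w"
    using p(1) length_w by (simp add: paths_to_def)
  then have "path_excess c r0 delta C w p < 0"
    using sfx p(2) by (simp add: sfx_dist_encode_less_iff)
  then have "path_excess c r0 delta C w (best_path x) < 0"
    using best_path_minimal[OF p(1)] by linarith
  moreover have "best_path x \<noteq> []" "length (best_path x) \<le> length w"
    using length_best_path[OF p(1)] p(2) \<open>length p \<le> length w\<close> by auto
  ultimately show ?thesis
    by (simp add: sfx_dist_encode_less_iff)
qed

theorem lemma5p4:
  fixes Sig :: "'a set" and SigOut :: "'b set" and n :: nat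
    and V :: "'v set" and lay :: "'v \<Rightarrow> nat" and r0 :: 'v
    and delta :: "'v \<Rightarrow> 'a \<Rightarrow> 'v" and C :: "'v \<Rightarrow> 'a \<Rightarrow> 'b"
    and w :: "'b list" and eps :: real and S :: "'v set"
  assumes "layered_graph Sig n V lay r0 delta"
    and "finite SigOut" and "SigOut \<noteq> {}"
    and "is_code Sig n V lay SigOut C"
    and "set w \<subseteq> SigOut" and "length w = n"
    and "eps > 0"
    and "S \<subseteq> Lset Sig n r0 delta C w eps"
  shows "\<exists>pt. is_prefix_tree Sig n r0 delta C w eps S pt"
proof -
  interpret layered_code Sig n V lay r0 delta C w "1 - eps"
    using assms(1,6) by unfold_locales
  have witness: "best_path v \<in> paths_to v \<and>
      sfx_dist (encode r0 delta C (best_path v)) (take (length (best_path v)) w) < 1 - eps"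
    if "v \<in> S" for v
  proof -
    obtain p where "p \<in> paths_to v" "p \<noteq> []"
      and "sfx_dist (encode r0 delta C p) (take (length p) w) < 1 - eps"
      using \<open>v \<in> S\<close> assms(8) unfolding Lset_def Li_def paths_to_def by force
    then show ?thesis
      using best_path_in_paths_to sfx_dist_best_path_less by blast
  qed
  have "rooted_tree r0 delta (\<Union>v\<in>S. path_edges r0 delta (best_path v))"
    using witness by (intro rooted_tree_UN_path_edges best_path_root best_path_take) auto
  then have "is_prefix_tree Sig n r0 delta C w eps S best_path"
    using witness unfolding is_prefix_tree_def paths_to_def by blast
  then show ?thesis
    by blast
qed

end
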